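(* Let $J$ be any nonempty real interval, possibly unbounded. A function $f\colon J^n\to\mathbb{R}$ is comonotonically modular if and only if it is comonotonically separable, that is, for every $\sigma\in S_n$ there exist functions $f^\sigma_i\colon J\to\mathbb{R}$, $i\in[n]$, such that $$f(\mathbf{x})=\sum_{i=1}^n f^\sigma_i(x_{\sigma(i)})\qquad\text{for all }\mathbf{x}\in J^n\cap\mathbb{R}^n_\sigma.$$
   Context: Notation: $[n]=\{1,\ldots,n\}$; $S_n$ is the set of permutations of $[n]$; for $\sigma\in S_n$, $\mathbb{R}^n_\sigma=\{\mathbf{x}\in\mathbb{R}^n: x_{\sigma(1)}\leq\cdots\leq x_{\sigma(n)}\}$. Two tuples $\mathbf{x},\mathbf{x}'\in J^n$ are comonotonic if both lie in $J^n\cap\mathbb{R}^n_\sigma$ for some $\sigma\in S_n$. A function $f\colon J^n\to\mathbb{R}$ is comonotonically modular if $f(\mathbf{x})+f(\mathbf{x}')=f(\mathbf{x}\wedge\mathbf{x}')+f(\mathbf{x}\vee\mathbf{x}')$ for all comonotonic $\mathbf{x},\mathbf{x}'\in J^n$, where $\wedge,\vee$ are componentwise min and max. *)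

theory Defs
  imports "HOL-Analysis.Analysis" "HOL-Combinatorics.Permutations"
begin

text \<open>Tuples in J^n are modelled as functions nat \<Rightarrow> real indexed by 1..n,
  extensional (value 0 outside {1..n}).\<close>

definition tuples :: "real set \<Rightarrow> nat \<Rightarrow> (nat \<Rightarrow> real) set" where
  "tuples J n = {x. (\<forall>i\<in>{1..n}. x i \<in> J) \<and> (\<forall>i. i \<notin> {1..n} \<longrightarrow> x i = 0)}"

definition ordered_by :: "nat \<Rightarrow> (nat \<Rightarrow> nat) \<Rightarrow> (nat \<Rightarrow> real) set" where
  "ordered_by n \<sigma> = {x. \<forall>i j. 1 \<le> i \<longrightarrow> i \<le> j \<longrightarrow> j \<le> n \<longrightarrow> x (\<sigma> i) \<le> x (\<sigma> j)}"

definition comonotonic :: "real set \<Rightarrow> nat \<Rightarrow> (nat \<Rightarrow> real) \<Rightarrow> (nat \<Rightarrow> real) \<Rightarrow> bool" where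
  "comonotonic J n x x' \<longleftrightarrow> (\<exists>\<sigma>. \<sigma> permutes {1..n} \<and>
      x \<in> tuples J n \<inter> ordered_by n \<sigma> \<and> x' \<in> tuples J n \<inter> ordered_by n \<sigma>)"

definition comonotonically_modular :: "real set \<Rightarrow> nat \<Rightarrow> ((nat \<Rightarrow> real) \<Rightarrow> real) \<Rightarrow> bool" where
  "comonotonically_modular J n f \<longleftrightarrow> (\<forall>x x'. comonotonic J n x x' \<longrightarrow>
      f x + f x' = f (\<lambda>i. min (x i) (x' i)) + f (\<lambda>i. max (x i) (x' i)))"

definition comonotonically_separable :: "real set \<Rightarrow> nat \<Rightarrow> ((nat \<Rightarrow> real) \<Rightarrow> real) \<Rightarrow> bool" where
  "comonotonically_separable J n f \<longleftrightarrow> (\<forall>\<sigma>. \<sigma> permutes {1..n} \<longrightarrow>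
      (\<exists>g :: nat \<Rightarrow> real \<Rightarrow> real. \<forall>x \<in> tuples J n \<inter> ordered_by n \<sigma>.
          f x = (\<Sum>i=1..n. g i (x (\<sigma> i)))))"

end

theory Submission
  imports Defs
begin

(* Separable implies modular: on one cone J^n \<inter> R^n_\<sigma> the function is a sum of
   one-variable functions, and each summand satisfies g(a) + g(b) = g(min a b) + g(max a b).

   Reading a tuple x of the cone in the order
   x_\<sigma>(1) \<le> ... \<le> x_\<sigma>(n) identifies the cone, as a lattice, with the set of
   nondecreasing tuples in J^n, on which f becomes a genuinely modular function F.
   For such an F and a base point c \<in> J, modularity with the constant tuple c splits
   F(y) into F(min y c) and F(max y c).  A tuple above c is lowered to c one coordinate
   at a time from the left, a tuple below c is raised to c one coordinate at a time
   from the right; by modularity each step changes F by an amount depending only on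
   the index and the value of the moved coordinate.  Summing these telescopes gives
   the separated form. *)

(* The nondecreasing tuples y_1 \<le> ... \<le> y_n with entries in J: the cone of the identity
   permutation, up to the values outside 1..n. *)
definition sorted_tuples :: "real set \<Rightarrow> nat \<Rightarrow> (nat \<Rightarrow> real) set" where
  "sorted_tuples J n = {y. y ` {1..n} \<subseteq> J \<and> mono_on {1..n} y}"

lemma sorted_tuplesI:
  assumes "\<And>i. i \<in> {1..n} \<Longrightarrow> y i \<in> J"
    and "\<And>i j. 1 \<le> i \<Longrightarrow> i \<le> j \<Longrightarrow> j \<le> n \<Longrightarrow> y i \<le> y j"
  shows "y \<in> sorted_tuples J n"
  using assms unfolding sorted_tuples_def mono_on_def by auto

lemma sorted_tuplesD:
  assumes "y \<in> sorted_tuples J n"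
  shows "\<And>i. i \<in> {1..n} \<Longrightarrow> y i \<in> J"
    and "\<And>i j. 1 \<le> i \<Longrightarrow> i \<le> j \<Longrightarrow> j \<le> n \<Longrightarrow> y i \<le> y j"
  using assms unfolding sorted_tuples_def mono_on_def by auto

locale chain_modular =
  fixes J :: "real set" and n :: nat and F :: "(nat \<Rightarrow> real) \<Rightarrow> real"
  assumes modular: "\<And>y y'. y \<in> sorted_tuples J n \<Longrightarrow> y' \<in> sorted_tuples J n \<Longrightarrow>
      F y + F y' = F (\<lambda>i. min (y i) (y' i)) + F (\<lambda>i. max (y i) (y' i))"
    and coords_cong: "\<And>y y'. (\<And>i. i \<in> {1..n} \<Longrightarrow> y i = y' i) \<Longrightarrow> F y = F y'"
begin

definition lower_incr :: "real \<Rightarrow> nat \<Rightarrow> real \<Rightarrow> real" where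
  "lower_incr c k t = F (\<lambda>i. if i < k then c else t) - F (\<lambda>i. if i \<le> k then c else t)"

definition upper_incr :: "real \<Rightarrow> nat \<Rightarrow> real \<Rightarrow> real" where
  "upper_incr c k t = F (\<lambda>i. if i \<le> k then t else c) - F (\<lambda>i. if i < k then t else c)"

(* Lowering coordinate k of (c,...,c,y_k,y_{k+1},...) to c costs lower_incr c k y_k,
   whatever the later coordinates are: apply modularity to (c,...,c,y_k,y_k,...,y_k) and
   (c,...,c,c,y_{k+1},...,y_n). *)
lemma lower_step:
  assumes c: "c \<in> J" and y: "y \<in> sorted_tuples J n" and k: "k \<in> {1..n}" and cy: "c \<le> y k"
  shows "F (\<lambda>i. if i < k then c else y i) = F (\<lambda>i. if i \<le> k then c else y i) + lower_incr c k (y k)"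
proof -
  define r where "r = (\<lambda>i::nat. if i < k then c else y k)"
  define s where "s = (\<lambda>i::nat. if i \<le> k then c else y i)"
  note yJ = sorted_tuplesD(1)[OF y] and ymono = sorted_tuplesD(2)[OF y]
  have "r \<in> sorted_tuples J n"
    unfolding r_def using c cy yJ k by (intro sorted_tuplesI) auto
  moreover have "s \<in> sorted_tuples J n"
  proof (rule sorted_tuplesI)
    fix i j :: nat assume "1 \<le> i" "i \<le> j" "j \<le> n"
    then show "s i \<le> s j"
      using ymono[of i j] ymono[of k j] k cy by (auto simp: s_def)
  qed (use c yJ in \<open>auto simp: s_def\<close>)
  ultimately have "F r + F s = F (\<lambda>i. min (r i) (s i)) + F (\<lambda>i. max (r i) (s i))"
    by (rule modular)
  moreover have "F (\<lambda>i. min (r i) (s i)) = F (\<lambda>i. if i \<le> k then c else y k)"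
    using ymono[of k] k cy by (intro coords_cong) (auto simp: r_def s_def)
  moreover have "F (\<lambda>i. max (r i) (s i)) = F (\<lambda>i. if i < k then c else y i)"
    using ymono[of k] k cy by (intro coords_cong) (auto simp: r_def s_def)
  ultimately show ?thesis unfolding lower_incr_def r_def s_def by simp
qed

lemma upper_step:
  assumes c: "c \<in> J" and y: "y \<in> sorted_tuples J n" and k: "k \<in> {1..n}" and yc: "y k \<le> c"
  shows "F (\<lambda>i. if i \<le> k then y i else c) = F (\<lambda>i. if i < k then y i else c) + upper_incr c k (y k)"
proof -
  define r where "r = (\<lambda>i::nat. if i \<le> k then y k else c)"
  define s where "s = (\<lambda>i::nat. if i < k then y i else c)"
  note yJ = sorted_tuplesD(1)[OF y] and ymono = sorted_tuplesD(2)[OF y]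
  have "r \<in> sorted_tuples J n"
    unfolding r_def using c yc yJ k by (intro sorted_tuplesI) auto
  moreover have "s \<in> sorted_tuples J n"
  proof (rule sorted_tuplesI)
    fix i j :: nat assume "1 \<le> i" "i \<le> j" "j \<le> n"
    then show "s i \<le> s j"
      using ymono[of i j] ymono[of i k] k yc by (auto simp: s_def)
  qed (use c yJ in \<open>auto simp: s_def\<close>)
  ultimately have "F r + F s = F (\<lambda>i. min (r i) (s i)) + F (\<lambda>i. max (r i) (s i))"
    by (rule modular)
  moreover have "F (\<lambda>i. min (r i) (s i)) = F (\<lambda>i. if i \<le> k then y i else c)"
    using ymono[of _ k] k yc by (intro coords_cong) (auto simp: r_def s_def)
  moreover have "F (\<lambda>i. max (r i) (s i)) = F (\<lambda>i. if i < k then y k else c)"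
    using ymono[of _ k] k yc by (intro coords_cong) (auto simp: r_def s_def)
  ultimately show ?thesis unfolding upper_incr_def r_def s_def by simp
qed

lemma lower_telescope:
  assumes c: "c \<in> J" and y: "y \<in> sorted_tuples J n" and ge: "\<And>i. i \<in> {1..n} \<Longrightarrow> c \<le> y i"
  shows "m \<le> n \<Longrightarrow> F y = F (\<lambda>i. if i \<le> m then c else y i) + (\<Sum>k=1..m. lower_incr c k (y k))"
proof (induction m)
  case 0
  have "F y = F (\<lambda>i. if i \<le> 0 then c else y i)" by (rule coords_cong) simp
  then show ?case by simp
next
  case (Suc m)
  have "Suc m \<in> {1..n}" using Suc.prems by simp
  from lower_step[OF c y this ge[OF this]] Suc show ?case by (simp add: less_Suc_eq_le)
qed

lemma upper_telescope:
  assumes c: "c \<in> J" and y: "y \<in> sorted_tuples J n" and le: "\<And>i. i \<in> {1..n} \<Longrightarrow> y i \<le> c"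
  shows "m \<le> n \<Longrightarrow> F (\<lambda>i. if i \<le> m then y i else c) = F (\<lambda>_. c) + (\<Sum>k=1..m. upper_incr c k (y k))"
proof (induction m)
  case 0
  have "F (\<lambda>i. if i \<le> 0 then y i else c) = F (\<lambda>_. c)" by (rule coords_cong) simp
  then show ?case by simp
next
  case (Suc m)
  have "Suc m \<in> {1..n}" using Suc.prems by simp
  from upper_step[OF c y this le[OF this]] Suc show ?case by (simp add: less_Suc_eq_le)
qed

(* Separability on sorted tuples: split y into min y c and max y c by modularity with the
   constant tuple c and telescope both halves down to the constant tuple. *)
lemma sorted_separable:
  assumes n: "n \<ge> 1" and c: "c \<in> J"
  shows "\<exists>g. \<forall>y\<in>sorted_tuples J n. F y = (\<Sum>i=1..n. g i (y i))"
proof -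
  define g where "g k t = lower_incr c k (max t c) + upper_incr c k (min t c)
    + (if k = 1 then F (\<lambda>_. c) else 0)" for k t
  have "F y = (\<Sum>i=1..n. g i (y i))" if y: "y \<in> sorted_tuples J n" for y
  proof -
    define lo where "lo = (\<lambda>i. min (y i) c)"
    define hi where "hi = (\<lambda>i. max (y i) c)"
    have const: "(\<lambda>_. c) \<in> sorted_tuples J n" using c by (intro sorted_tuplesI) auto
    have lo: "lo \<in> sorted_tuples J n"
      unfolding lo_def using sorted_tuplesD[OF y] c
      by (intro sorted_tuplesI min.mono) (auto simp: min_def)
    have hi: "hi \<in> sorted_tuples J n"
      unfolding hi_def using sorted_tuplesD[OF y] c
      by (intro sorted_tuplesI max.mono) (auto simp: max_def)
    have "F y + F (\<lambda>_. c) = F lo + F hi"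
      using modular[OF y const] unfolding lo_def hi_def .
    moreover have "F hi = F (\<lambda>_. c) + (\<Sum>k=1..n. lower_incr c k (hi k))"
    proof -
      have "F (\<lambda>i. if i \<le> n then c else hi i) = F (\<lambda>_. c)" by (rule coords_cong) simp
      then show ?thesis using lower_telescope[OF c hi _ order_refl] by (simp add: hi_def)
    qed
    moreover have "F lo = F (\<lambda>_. c) + (\<Sum>k=1..n. upper_incr c k (lo k))"
    proof -
      have "F lo = F (\<lambda>i. if i \<le> n then lo i else c)" by (rule coords_cong) simp
      then show ?thesis using upper_telescope[OF c lo _ order_refl] by (simp add: lo_def)
    qed
    moreover have "(\<Sum>i=1..n. (if i = 1 then F (\<lambda>_. c) else 0)) = F (\<lambda>_. c)"
      using n by (simp add: sum.delta)
    ultimately show ?thesis by (simp add: g_def sum.distrib lo_def hi_def)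
  qed
  then show ?thesis by blast
qed

end

definition unpermute :: "nat \<Rightarrow> (nat \<Rightarrow> nat) \<Rightarrow> (nat \<Rightarrow> real) \<Rightarrow> nat \<Rightarrow> real" where
  "unpermute n \<sigma> y = (\<lambda>j. if j \<in> {1..n} then y (inv \<sigma> j) else 0)"

lemma unpermute_at:
  assumes "\<sigma> permutes {1..n}" and "i \<in> {1..n}"
  shows "unpermute n \<sigma> y (\<sigma> i) = y i"
  using assms permutes_in_image[OF assms(1)] permutes_inverses(2)[OF assms(1)]
  unfolding unpermute_def by simp

lemma unpermute_in_cone:
  assumes \<sigma>: "\<sigma> permutes {1..n}" and y: "y \<in> sorted_tuples J n"
  shows "unpermute n \<sigma> y \<in> tuples J n \<inter> ordered_by n \<sigma>"
proof
  show "unpermute n \<sigma> y \<in> tuples J n"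
    using sorted_tuplesD(1)[OF y] permutes_in_image[OF permutes_inv[OF \<sigma>]]
    unfolding tuples_def unpermute_def by auto
  show "unpermute n \<sigma> y \<in> ordered_by n \<sigma>"
    using sorted_tuplesD(2)[OF y] unfolding ordered_by_def
    by (auto simp: unpermute_at[OF \<sigma>])
qed

lemma unpermute_compose:
  assumes \<sigma>: "\<sigma> permutes {1..n}" and x: "x \<in> tuples J n"
  shows "unpermute n \<sigma> (x \<circ> \<sigma>) = x"
  using x unfolding tuples_def unpermute_def by (auto simp: permutes_inverses(1)[OF \<sigma>])

lemma compose_sorted:
  assumes \<sigma>: "\<sigma> permutes {1..n}" and x: "x \<in> tuples J n \<inter> ordered_by n \<sigma>"
  shows "x \<circ> \<sigma> \<in> sorted_tuples J n"
  using x permutes_in_image[OF \<sigma>] unfolding tuples_def ordered_by_def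
  by (intro sorted_tuplesI) auto

lemma chain_modular_unpermute:
  assumes \<sigma>: "\<sigma> permutes {1..n}" and M: "comonotonically_modular J n f"
  shows "chain_modular J n (f \<circ> unpermute n \<sigma>)"
proof
  fix y y' assume y: "y \<in> sorted_tuples J n" and y': "y' \<in> sorted_tuples J n"
  let ?u = "unpermute n \<sigma> y" and ?u' = "unpermute n \<sigma> y'"
  have "comonotonic J n ?u ?u'"
    unfolding comonotonic_def using \<sigma> unpermute_in_cone[OF \<sigma> y] unpermute_in_cone[OF \<sigma> y'] by blast
  then have "f ?u + f ?u' = f (\<lambda>j. min (?u j) (?u' j)) + f (\<lambda>j. max (?u j) (?u' j))"
    using M unfolding comonotonically_modular_def by blast
  moreover have "(\<lambda>j. min (?u j) (?u' j)) = unpermute n \<sigma> (\<lambda>i. min (y i) (y' i))"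
    and "(\<lambda>j. max (?u j) (?u' j)) = unpermute n \<sigma> (\<lambda>i. max (y i) (y' i))"
    unfolding unpermute_def by auto
  ultimately show "(f \<circ> unpermute n \<sigma>) y + (f \<circ> unpermute n \<sigma>) y'
      = (f \<circ> unpermute n \<sigma>) (\<lambda>i. min (y i) (y' i)) + (f \<circ> unpermute n \<sigma>) (\<lambda>i. max (y i) (y' i))"
    by simp
next
  fix y y' :: "nat \<Rightarrow> real" assume "\<And>i. i \<in> {1..n} \<Longrightarrow> y i = y' i"
  then have "unpermute n \<sigma> y = unpermute n \<sigma> y'"
    using permutes_in_image[OF permutes_inv[OF \<sigma>]] unfolding unpermute_def by auto
  then show "(f \<circ> unpermute n \<sigma>) y = (f \<circ> unpermute n \<sigma>) y'" by simp
qed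

lemma modular_imp_separable:
  assumes n: "n \<ge> 1" and J: "J \<noteq> {}" and M: "comonotonically_modular J n f"
  shows "comonotonically_separable J n f"
  unfolding comonotonically_separable_def
proof (intro allI impI)
  fix \<sigma> assume \<sigma>: "\<sigma> permutes {1..n}"
  interpret chain_modular J n "f \<circ> unpermute n \<sigma>"
    using chain_modular_unpermute[OF \<sigma> M] .
  obtain c where "c \<in> J" using J by blast
  then obtain g where g: "\<forall>y\<in>sorted_tuples J n. f (unpermute n \<sigma> y) = (\<Sum>i=1..n. g i (y i))"
    using sorted_separable[OF n] by auto
  have "f x = (\<Sum>i=1..n. g i (x (\<sigma> i)))" if x: "x \<in> tuples J n \<inter> ordered_by n \<sigma>" for x
  proof -
    have "f x = f (unpermute n \<sigma> (x \<circ> \<sigma>))" using unpermute_compose[OF \<sigma> IntD1[OF x]] by simp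
    also have "\<dots> = (\<Sum>i=1..n. g i ((x \<circ> \<sigma>) i))" using g compose_sorted[OF \<sigma> x] by blast
    finally show ?thesis by simp
  qed
  then show "\<exists>g. \<forall>x\<in>tuples J n \<inter> ordered_by n \<sigma>. f x = (\<Sum>i=1..n. g i (x (\<sigma> i)))" by blast
qed

lemma cone_min_max_closed:
  assumes x: "x \<in> tuples J n \<inter> ordered_by n \<sigma>" and x': "x' \<in> tuples J n \<inter> ordered_by n \<sigma>"
  shows "(\<lambda>i. min (x i) (x' i)) \<in> tuples J n \<inter> ordered_by n \<sigma>"
    and "(\<lambda>i. max (x i) (x' i)) \<in> tuples J n \<inter> ordered_by n \<sigma>"
proof -
  have ord: "x (\<sigma> i) \<le> x (\<sigma> j)" "x' (\<sigma> i) \<le> x' (\<sigma> j)" if "1 \<le> i" "i \<le> j" "j \<le> n" for i j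
    using x x' that unfolding ordered_by_def by auto
  have "(\<lambda>i. min (x i) (x' i)) \<in> ordered_by n \<sigma>" "(\<lambda>i. max (x i) (x' i)) \<in> ordered_by n \<sigma>"
    unfolding ordered_by_def using min.mono[OF ord] max.mono[OF ord] by blast+
  moreover have "(\<lambda>i. min (x i) (x' i)) \<in> tuples J n" "(\<lambda>i. max (x i) (x' i)) \<in> tuples J n"
    using x x' unfolding tuples_def by (auto simp: min_def max_def)
  ultimately show "(\<lambda>i. min (x i) (x' i)) \<in> tuples J n \<inter> ordered_by n \<sigma>"
    and "(\<lambda>i. max (x i) (x' i)) \<in> tuples J n \<inter> ordered_by n \<sigma>" by auto
qed

lemma modular_real_fun: "g a + g b = g (min a b) + g (max a b)" for g :: "real \<Rightarrow> real"
  by (cases "a \<le> b") (auto simp: min_def max_def)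

lemma separable_imp_modular:
  assumes S: "comonotonically_separable J n f"
  shows "comonotonically_modular J n f"
  unfolding comonotonically_modular_def
proof (intro allI impI)
  fix x x' assume "comonotonic J n x x'"
  then obtain \<sigma> where \<sigma>: "\<sigma> permutes {1..n}" and x: "x \<in> tuples J n \<inter> ordered_by n \<sigma>"
    and x': "x' \<in> tuples J n \<inter> ordered_by n \<sigma>" unfolding comonotonic_def by blast
  obtain g where g: "\<forall>x \<in> tuples J n \<inter> ordered_by n \<sigma>. f x = (\<Sum>i=1..n. g i (x (\<sigma> i)))"
    using S \<sigma> unfolding comonotonically_separable_def by blast
  have "f x + f x' = (\<Sum>i=1..n. g i (x (\<sigma> i)) + g i (x' (\<sigma> i)))"
    using g x x' by (simp add: sum.distrib)
  also have "\<dots> = (\<Sum>i=1..n. g i (min (x (\<sigma> i)) (x' (\<sigma> i))) + g i (max (x (\<sigma> i)) (x' (\<sigma> i))))"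
    by (rule sum.cong[OF refl], rule modular_real_fun)
  also have "\<dots> = f (\<lambda>i. min (x i) (x' i)) + f (\<lambda>i. max (x i) (x' i))"
    using g cone_min_max_closed[OF x x'] by (simp add: sum.distrib)
  finally show "f x + f x' = f (\<lambda>i. min (x i) (x' i)) + f (\<lambda>i. max (x i) (x' i))" .
qed

theorem corollary13:
  fixes J :: "real set" and n :: nat and f :: "(nat \<Rightarrow> real) \<Rightarrow> real"
  assumes "n \<ge> 1" and "is_interval J" and "J \<noteq> {}"
  shows "comonotonically_modular J n f \<longleftrightarrow> comonotonically_separable J n f"
proof
  assume "comonotonically_modular J n f"
  then show "comonotonically_separable J n f"
    using modular_imp_separable assms(1,3) by blast
next
  assume "comonotonically_separable J n f"
  then show "comonotonically_modular J n f" by (rule separable_imp_modular)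
qed

end
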